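(* Let $a>0$, $1<b\le 2$, $R_0>R_\infty>0$ and $\tau>0$, with $(a,b)\neq(1,2)$. Define, for $\Re\{s\}>0$, $Z_U(s):=R_\infty+(R_0-R_\infty)\,\frac{U(a,b,s\tau)}{1+U(a,b,s\tau)}$. Then $Z_U$ is not a single-time-constant Debye element: there is no $\tau'>0$ such that $Z_U(s)=R_\infty+\frac{R_0-R_\infty}{1+s\tau'}$ for all $s$ with $\Re\{s\}>0$. In particular, its time-domain relaxation is not a single exponential.
   Context: $U(a,b,z)$ denotes the Tricomi confluent hypergeometric function, given for $a>0$, $b>1$, $\Re\{z\}>0$ by $U(a,b,z)=\frac{1}{\Gamma(a)}\int_0^\infty e^{-zt}t^{a-1}(1+t)^{b-a-1}\,\mathrm{d}t$. *)

theory Defs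
  imports "HOL-Analysis.Analysis"
begin

text \<open>Tricomi confluent hypergeometric function, via its integral representation
  (valid for a > 0, Re z > 0):
  U(a,b,z) = 1/Gamma(a) * integral over (0,inf) of exp(-z t) t^(a-1) (1+t)^(b-a-1) dt.\<close>
definition tricomiU :: "real \<Rightarrow> real \<Rightarrow> complex \<Rightarrow> complex" where
  "tricomiU a b z =
     complex_of_real (1 / Gamma a) *
     integral {0<..} (\<lambda>t::real. exp (- z * complex_of_real t) *
                                 complex_of_real (t powr (a - 1) * (1 + t) powr (b - a - 1)))"

definition Z_U :: "real \<Rightarrow> real \<Rightarrow> real \<Rightarrow> real \<Rightarrow> real \<Rightarrow> complex \<Rightarrow> complex" where
  "Z_U a b R0 Rinf tau s =
     complex_of_real Rinf + complex_of_real (R0 - Rinf) *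
       (tricomiU a b (s * complex_of_real tau) / (1 + tricomiU a b (s * complex_of_real tau)))"

end

theory Submission
  imports Defs
begin

text \<open>On the positive real axis a Debye element would force the Laplace transform of the weight
  w(t) = t^(a-1) (1+t)^(b-a-1) to equal K/y, the transform of a positive constant K.
  Comparing with the transforms Gamma(p)/y^p of the powers t^(p-1) rules this out: for a \<noteq> 1
  the behaviour w(t) ~ t^(a-1) near 0 is incompatible with K/y as y tends to infinity, and for
  a = 1, b < 2 the decay w(t) \<le> t^(b-2) at infinity is incompatible with K/y as y tends to 0.\<close>

lemma Gamma_integral_real_Ioi:
  fixes p :: real
  assumes "p > 0"
  shows "((\<lambda>t. t powr (p - 1) / exp t) has_integral Gamma p) {0<..}"
  using Gamma_integral_real[OF assms]
  by (subst has_integral_spike_set_eq) (auto intro: negligible_subset[of "{0}"])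

lemma has_integral_powr_mult_exp_neg:
  fixes p y :: real
  assumes p: "p > 0" and y: "y > 0"
  shows "((\<lambda>t. t powr (p - 1) * exp (- (y * t))) has_integral Gamma p / y powr p) {0<..}"
proof -
  define f where "f = (\<lambda>t::real. t powr (p - 1) / exp t)"
  have f_integral: "(f has_integral Gamma p) {0<..}"
    using Gamma_integral_real_Ioi[OF p] by (simp add: f_def)
  have "f absolutely_integrable_on {0<..}"
    using f_integral by (intro nonnegative_absolutely_integrable_1) (auto simp: f_def)
  moreover have "(\<lambda>t. y * t) ` {0<..} = {0<..}"
  proof (intro set_eqI iffI)
    fix u :: real assume "u \<in> {0<..}"
    then have "u = y * (u / y)" "u / y \<in> {0<..}" using y by auto
    then show "u \<in> (\<lambda>t. y * t) ` {0<..}" by (rule image_eqI)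
  qed (use y in auto)
  moreover note
    has_absolute_integral_change_of_variables_1'[of "{0<..}" "\<lambda>t. y * t" "\<lambda>_. y" f "Gamma p"]
  moreover have "((\<lambda>t. y * t) has_field_derivative y) (at t within {0<..})" for t
    by (auto intro!: derivative_eq_intros)
  moreover have "inj_on (\<lambda>t. y * t) {0<..}"
    using y by (simp add: inj_on_def)
  ultimately have "(\<lambda>t. \<bar>y\<bar> * f (y * t)) absolutely_integrable_on {0<..} \<and>
                   integral {0<..} (\<lambda>t. \<bar>y\<bar> * f (y * t)) = Gamma p"
    using f_integral by (simp add: has_integral_iff)
  then have "((\<lambda>t. \<bar>y\<bar> * f (y * t)) has_integral Gamma p) {0<..}"
    using has_integral_iff set_lebesgue_integral_eq_integral(1) by blast
  with y have "((\<lambda>t. y * f (y * t)) has_integral Gamma p) {0<..}"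
    by simp
  then have "((\<lambda>t. y * f (y * t) / y powr p) has_integral Gamma p / y powr p) {0<..}"
    by (rule has_integral_divide)
  moreover have "y * f (y * t) / y powr p = t powr (p - 1) * exp (- (y * t))" if "t > 0" for t
  proof -
    have "y powr (p - 1) = y powr p / y"
      using y by (simp add: powr_diff)
    then show ?thesis
      using y that by (simp add: f_def powr_mult exp_minus field_simps)
  qed
  ultimately show ?thesis
    by (rule has_integral_cong[THEN iffD1, rotated]) simp
qed

lemma has_integral_exp_neg_Ioi:
  fixes y :: real
  assumes "y > 0"
  shows "((\<lambda>t. exp (- (y * t))) has_integral 1 / y) {0<..}"
proof -
  have "((\<lambda>t. t powr (1 - 1) * exp (- (y * t))) has_integral Gamma 1 / y powr 1) {0<..}"
    using has_integral_powr_mult_exp_neg[of 1 y] assms by simp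
  then show ?thesis
    using assms by (subst (asm) has_integral_cong) auto
qed

lemma ex_powr_eq:
  fixes c e :: real
  assumes "c > 0" and "e \<noteq> 0"
  shows "\<exists>y>0. y powr e = c"
  using assms by (intro exI[of _ "c powr (1 / e)"]) (simp add: powr_powr)

lemma laplace_reciprocal_not_dominated_by_power:
  fixes f :: "real \<Rightarrow> real" and p K :: real
  assumes "p > 0" and "p \<noteq> 1" and "K > 0"
    and dominated: "\<And>t. t > 0 \<Longrightarrow> f t \<le> t powr (p - 1)"
    and laplace: "\<And>y. y > 0 \<Longrightarrow> ((\<lambda>t. exp (- (y * t)) * f t) has_integral K / y) {0<..}"
  shows False
proof -
  have Gamma_pos: "Gamma p > 0"
    using \<open>p > 0\<close> by (rule Gamma_real_pos)
  have bound: "K \<le> Gamma p * y powr (1 - p)" if y: "y > 0" for y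
  proof -
    have "K / y \<le> Gamma p / y powr p"
      by (rule has_integral_le[OF laplace[OF y] has_integral_powr_mult_exp_neg[OF \<open>p > 0\<close> y]])
         (simp add: dominated mult.commute)
    then show ?thesis
      using y by (simp add: powr_diff field_simps)
  qed
  obtain y where "y > 0" and "y powr (1 - p) = K / (2 * Gamma p)"
    using ex_powr_eq[of "K / (2 * Gamma p)" "1 - p"] \<open>K > 0\<close> \<open>p \<noteq> 1\<close> Gamma_pos by auto
  with bound[of y] Gamma_pos \<open>K > 0\<close> show False
    by simp
qed

lemma laplace_reciprocal_not_minorized_by_power:
  fixes f :: "real \<Rightarrow> real" and p K :: real
  assumes "0 < p" and "p < 1"
    and minorized: "\<And>t. t > 0 \<Longrightarrow> (t powr (p - 1) - 1) / 2 \<le> f t"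
    and laplace: "\<And>y. y > 0 \<Longrightarrow> ((\<lambda>t. exp (- (y * t)) * f t) has_integral K / y) {0<..}"
  shows False
proof -
  have Gamma_pos: "Gamma p > 0"
    using \<open>p > 0\<close> by (rule Gamma_real_pos)
  have bound: "Gamma p * y powr (1 - p) \<le> 2 * K + 1" if y: "y > 0" for y
  proof -
    have "((\<lambda>t. (t powr (p - 1) * exp (- (y * t)) - exp (- (y * t))) / 2)
            has_integral (Gamma p / y powr p - 1 / y) / 2) {0<..}"
      by (intro has_integral_divide has_integral_diff has_integral_powr_mult_exp_neg
          has_integral_exp_neg_Ioi \<open>p > 0\<close> y)
    then have laplace_bound: "(Gamma p / y powr p - 1 / y) / 2 \<le> K / y"
    proof (rule has_integral_le[OF _ laplace[OF y]])
      fix t :: real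
      assume "t \<in> {0<..}"
      then have "exp (- (y * t)) * ((t powr (p - 1) - 1) / 2) \<le> exp (- (y * t)) * f t"
        by (intro mult_left_mono minorized) auto
      then show "(t powr (p - 1) * exp (- (y * t)) - exp (- (y * t))) / 2 \<le> exp (- (y * t)) * f t"
        by (simp add: algebra_simps)
    qed
    have "Gamma p * y powr (1 - p) = 2 * y * ((Gamma p / y powr p - 1 / y) / 2) + 1"
      using y by (simp add: powr_diff field_simps)
    also have "\<dots> \<le> 2 * y * (K / y) + 1"
      using laplace_bound y by (intro add_right_mono mult_left_mono) auto
    finally show ?thesis
      using y by simp
  qed
  obtain y where "y > 0" and "y powr (1 - p) = (2 * \<bar>K\<bar> + 2) / Gamma p"
    using ex_powr_eq[of "(2 * \<bar>K\<bar> + 2) / Gamma p" "1 - p"] \<open>p < 1\<close> Gamma_pos by auto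
  with bound[of y] Gamma_pos show False
    by simp
qed

definition tricomi_weight :: "real \<Rightarrow> real \<Rightarrow> real \<Rightarrow> real" where
  "tricomi_weight a b t = t powr (a - 1) * (1 + t) powr (b - a - 1)"

lemma tricomi_weight_le_powr:
  assumes "b \<le> a + 1" and "t > 0"
  shows "tricomi_weight a b t \<le> t powr (a - 1)"
proof -
  have "(1 + t) powr (b - a - 1) \<le> (1 + t) powr 0"
    using assms by (intro powr_mono) auto
  then show ?thesis
    using \<open>t > 0\<close> by (simp add: tricomi_weight_def mult_left_le)
qed

lemma tricomi_weight_one_le_powr:
  assumes "b \<le> 2" and "t > 0"
  shows "tricomi_weight 1 b t \<le> t powr (b - 2)"
  using assms by (simp add: tricomi_weight_def powr_mono2')

lemma tricomi_weight_ge: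
  assumes "a \<le> 1" and "a \<le> b" and "t > 0"
  shows "(t powr (a - 1) - 1) / 2 \<le> tricomi_weight a b t"
proof (cases "t \<ge> 1")
  case True
  have "t powr (a - 1) \<le> t powr 0"
    using True \<open>a \<le> 1\<close> by (intro powr_mono) auto
  moreover have "tricomi_weight a b t \<ge> 0"
    by (simp add: tricomi_weight_def)
  ultimately show ?thesis
    using True by simp
next
  case False
  have "1 / 2 \<le> 1 / (1 + t)"
    using False \<open>t > 0\<close> by (simp add: field_simps)
  also have "\<dots> = (1 + t) powr (- 1)"
    using \<open>t > 0\<close> by (simp add: powr_minus divide_inverse)
  also have "\<dots> \<le> (1 + t) powr (b - a - 1)"
    using \<open>t > 0\<close> \<open>a \<le> b\<close> by (intro powr_mono) auto
  finally have "t powr (a - 1) * (1 / 2) \<le> t powr (a - 1) * (1 + t) powr (b - a - 1)"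
    by (rule mult_left_mono) simp
  then show ?thesis
    by (simp add: tricomi_weight_def)
qed

lemma tricomiU_of_real:
  "tricomiU a b (complex_of_real y) =
     complex_of_real (1 / Gamma a) *
     integral {0<..} (\<lambda>t. complex_of_real (exp (- (y * t)) * tricomi_weight a b t))"
  by (simp add: tricomiU_def tricomi_weight_def exp_of_real[symmetric])

lemma tricomiU_eq_if_Z_U_Debye:
  assumes "R0 \<noteq> Rinf" and "1 + s * complex_of_real tau' \<noteq> 0"
    and "Z_U a b R0 Rinf tau s =
           complex_of_real Rinf + complex_of_real (R0 - Rinf) / (1 + s * complex_of_real tau')"
  shows "tricomiU a b (s * complex_of_real tau) = 1 / (s * complex_of_real tau')"
proof -
  define u where "u = tricomiU a b (s * complex_of_real tau)"
  define w where "w = s * complex_of_real tau'"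
  have "complex_of_real (R0 - Rinf) * (u / (1 + u)) = complex_of_real (R0 - Rinf) * (1 / (1 + w))"
    using assms(3) by (simp add: Z_U_def u_def w_def)
  then have ratio: "u / (1 + u) = 1 / (1 + w)"
    by (subst (asm) mult_left_cancel) (use assms(1) in auto)
  have "1 + w \<noteq> 0"
    using assms(2) by (simp add: w_def)
  moreover have "1 + u \<noteq> 0"
  proof
    assume "1 + u = 0"
    with ratio \<open>1 + w \<noteq> 0\<close> show False
      by simp
  qed
  ultimately have "u * (1 + w) = 1 + u"
    using ratio by (simp add: frac_eq_eq)
  then have "u * w = 1"
    by (simp add: algebra_simps)
  then have "u = 1 / w"
    by (metis mult_zero_right nonzero_eq_divide_eq zero_neq_one)
  then show ?thesis
    by (simp add: u_def w_def)
qed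

lemma has_integral_tricomi_weight_if_Z_U_Debye:
  fixes a b R0 Rinf tau tau' y :: real
  assumes "a > 0" and "R0 \<noteq> Rinf" and "tau > 0" and "tau' > 0" and "y > 0"
    and Debye: "\<And>s. Re s > 0 \<Longrightarrow> Z_U a b R0 Rinf tau s =
                  complex_of_real Rinf + complex_of_real (R0 - Rinf) / (1 + s * complex_of_real tau')"
  shows "((\<lambda>t. exp (- (y * t)) * tricomi_weight a b t) has_integral Gamma a * tau / tau' / y) {0<..}"
proof -
  define s where "s = complex_of_real (y / tau)"
  define g where "g = (\<lambda>t. complex_of_real (exp (- (y * t)) * tricomi_weight a b t))"
  have "1 + s * complex_of_real tau' = complex_of_real (1 + y / tau * tau')"
    by (simp add: s_def)
  moreover have "1 + y / tau * tau' > 0"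
    using assms(3-5) by (simp add: add_pos_pos)
  ultimately have "1 + s * complex_of_real tau' \<noteq> 0"
    by (metis of_real_eq_0_iff less_irrefl)
  moreover have "s * complex_of_real tau = complex_of_real y"
    unfolding s_def of_real_mult[symmetric] using \<open>tau > 0\<close> by simp
  moreover have "Re s > 0"
    using assms(3,5) by (simp add: s_def)
  ultimately have "tricomiU a b (complex_of_real y) = 1 / (s * complex_of_real tau')"
    using tricomiU_eq_if_Z_U_Debye[OF \<open>R0 \<noteq> Rinf\<close> _ Debye] by metis
  then have "complex_of_real (1 / Gamma a) * integral {0<..} g = complex_of_real (tau / (y * tau'))"
    by (simp add: tricomiU_of_real g_def s_def)
  moreover have "Gamma a > 0"
    using \<open>a > 0\<close> by (rule Gamma_real_pos)
  ultimately have integral_g: "integral {0<..} g = complex_of_real (Gamma a * tau / tau' / y)"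
    by (simp add: field_simps)
  then have "g integrable_on {0<..}"
    using assms(3-5) \<open>Gamma a > 0\<close> not_integrable_integral by fastforce
  with integral_g have "(g has_integral complex_of_real (Gamma a * tau / tau' / y)) {0<..}"
    by (simp add: has_integral_iff)
  from has_integral_Re[OF this] show ?thesis
    by (simp add: g_def)
qed

theorem proposition1:
  fixes a b R0 Rinf tau :: real
  assumes "a > 0" and "1 < b" and "b \<le> 2"
    and "R0 > Rinf" and "Rinf > 0" and "tau > 0"
    and "(a, b) \<noteq> (1, 2)"
  shows "\<not> (\<exists>tau'::real. tau' > 0 \<and>
           (\<forall>s::complex. Re s > 0 \<longrightarrow>
              Z_U a b R0 Rinf tau s =
                complex_of_real Rinf + complex_of_real (R0 - Rinf) / (1 + s * complex_of_real tau')))"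
proof
  assume "\<exists>tau'::real. tau' > 0 \<and>
           (\<forall>s::complex. Re s > 0 \<longrightarrow>
              Z_U a b R0 Rinf tau s =
                complex_of_real Rinf + complex_of_real (R0 - Rinf) / (1 + s * complex_of_real tau'))"
  then obtain tau' where "tau' > 0" and Debye: "\<And>s. Re s > 0 \<Longrightarrow> Z_U a b R0 Rinf tau s =
                complex_of_real Rinf + complex_of_real (R0 - Rinf) / (1 + s * complex_of_real tau')"
    by blast
  define K where "K = Gamma a * tau / tau'"
  have "K > 0"
    using Gamma_real_pos[OF \<open>a > 0\<close>] \<open>tau > 0\<close> \<open>tau' > 0\<close> by (simp add: K_def)
  have laplace: "((\<lambda>t. exp (- (y * t)) * tricomi_weight a b t) has_integral K / y) {0<..}"
    if "y > 0" for y
    unfolding K_def using \<open>R0 > Rinf\<close> \<open>tau > 0\<close> \<open>tau' > 0\<close> that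
    by (intro has_integral_tricomi_weight_if_Z_U_Debye[OF \<open>a > 0\<close> _ _ _ _ Debye]) auto
  consider "a > 1" | "a < 1" | "a = 1" "b < 2"
    using assms(3,7) by fastforce
  then show False
  proof cases
    case 1
    with \<open>b \<le> 2\<close> show False
      by (intro laplace_reciprocal_not_dominated_by_power[OF \<open>a > 0\<close> _ \<open>K > 0\<close> _ laplace]
          tricomi_weight_le_powr) auto
  next
    case 2
    with \<open>1 < b\<close> show False
      by (intro laplace_reciprocal_not_minorized_by_power[OF \<open>a > 0\<close> 2 _ laplace]
          tricomi_weight_ge) auto
  next
    case 3
    with \<open>1 < b\<close> show False
      using laplace_reciprocal_not_dominated_by_power[of "b - 1" K "tricomi_weight 1 b"]
        tricomi_weight_one_le_powr laplace \<open>K > 0\<close> by fastforce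
  qed
qed

end
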